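(* Let $d\ge 2$ and identify $F_d(\mathfrak B)^2$ with $G_d^2\subset K[Y_d,Z_d]$ as described in the context. For each $n\ge2$ and each partition $\lambda=(\lambda_1,\lambda_2)\vdash n$, the following elements form a maximal linearly independent system of highest weight vectors of $GL_d$-submodules of $G_d^2$ isomorphic to $W(\lambda)$ (i.e. every such highest weight vector is a linear combination of them, and their number equals the multiplicity of $W(\lambda)$): $w^{(j)}_{(n)}=y_1^jz_1^{n-j}$ for $j=1,\dots,n-1$ if $\lambda=(n)$; and $w^{(j)}_\lambda=y_1^j(y_1z_2-y_2z_1)^{\lambda_2}z_1^{\lambda_1-\lambda_2-j}$ for $j=0,1,\dots,\lambda_1-\lambda_2$ if $\lambda_2>0$.
   Context: $K$ is a field of characteristic $0$. $\mathfrak B$ is the variety of bicommutative algebras (identities $(x_1x_2)x_3=(x_1x_3)x_2$, $x_1(x_2x_3)=x_2(x_1x_3)$) with free algebra $F_d(\mathfrak B)$ on $x_1,\dots,x_d$. Model: let $K[Y_d,Z_d]$ be the commutative polynomial ring in $y_1,\dots,y_d,z_1,\dots,z_d$, and $G_d$ the algebra with basis $\{x_1,\dots,x_d\}\cup\{Y^\alpha Z^\beta:|\alpha|>0,|\beta|>0\}$ and multiplication $x_ix_j=y_iz_j$, $x_i\cdot(Y^\alpha Z^\beta)=y_iY^\alpha Z^\beta$, $(Y^\alpha Z^\beta)\cdot x_j=Y^\alpha Z^\beta z_j$, $(Y^\alpha Z^\beta)(Y^\gamma Z^\delta)=Y^{\alpha+\gamma}Z^{\beta+\delta}$; it is known that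 $x_i\mapsto x_i$ gives an isomorphism $F_d(\mathfrak B)\cong G_d$ of multigraded algebras, so $F_d(\mathfrak B)^2$ is identified with $G_d^2$, the span of monomials of positive degree in both the $y$'s and the $z$'s. $GL_d$ acts on $G_d^2$ by acting on $\mathrm{span}(y_i)$ and on $\mathrm{span}(z_i)$ in the same way as on $\mathrm{span}(x_i)$, extended multiplicatively. $W(\lambda)$ is the irreducible polynomial $GL_d$-module indexed by $\lambda$; a highest weight vector of a submodule isomorphic to $W(\lambda)$ is a nonzero element of multidegree $\lambda$ (degree $\lambda_i$ in the pair $y_i,z_i$) generating it, equivalently annihilated by the derivations $y_j\mapsto y_i,z_j\mapsto z_i$ (other variables $\mapsto 0$) for all $i<j$. *)

theory Defs
  imports "HOL-Library.Poly_Mapping"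
begin

text \<open>Variables of K[Y_d,Z_d]: Yv i stands for y_i, Zv i for z_i (indices 1..d).\<close>
datatype var = Yv nat | Zv nat

fun vidx :: "var \<Rightarrow> nat" where
  "vidx (Yv i) = i" | "vidx (Zv i) = i"

type_synonym 'a pol = "(var \<Rightarrow>\<^sub>0 nat) \<Rightarrow>\<^sub>0 'a"

definition PVar :: "var \<Rightarrow> 'a::comm_ring_1 pol" where
  "PVar v = Poly_Mapping.single (Poly_Mapping.single v 1) 1"

definition PConst :: "'a::comm_ring_1 \<Rightarrow> 'a pol" where
  "PConst c = Poly_Mapping.single 0 c"

definition pderiv_var :: "var \<Rightarrow> 'a::comm_ring_1 pol \<Rightarrow> 'a pol" where
  "pderiv_var v p = (\<Sum>m\<in>Poly_Mapping.keys p.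
      Poly_Mapping.single (m - Poly_Mapping.single v (1::nat))
        (of_nat (Poly_Mapping.lookup (m :: var \<Rightarrow>\<^sub>0 nat) v) * Poly_Mapping.lookup p m))"

definition Dder :: "nat \<Rightarrow> nat \<Rightarrow> 'a::comm_ring_1 pol \<Rightarrow> 'a pol" where
  "Dder i j p = PVar (Yv i) * pderiv_var (Yv j) p + PVar (Zv i) * pderiv_var (Zv j) p"

definition G2 :: "nat \<Rightarrow> 'a::comm_ring_1 pol set" where
  "G2 d = {p. \<forall>m\<in>Poly_Mapping.keys p. (\<forall>v. Poly_Mapping.lookup m v > 0 \<longrightarrow> vidx v \<in> {1..d})
                \<and> (\<exists>i. Poly_Mapping.lookup m (Yv i) > 0) \<and> (\<exists>i. Poly_Mapping.lookup m (Zv i) > 0)}"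

definition has_multideg :: "(nat \<Rightarrow> nat) \<Rightarrow> 'a::comm_ring_1 pol \<Rightarrow> bool" where
  "has_multideg lam p \<longleftrightarrow> (\<forall>m\<in>Poly_Mapping.keys p. \<forall>i. Poly_Mapping.lookup m (Yv i) + Poly_Mapping.lookup m (Zv i) = lam i)"

definition lam2 :: "nat \<Rightarrow> nat \<Rightarrow> nat \<Rightarrow> nat" where
  "lam2 l1 l2 i = (if i = 1 then l1 else if i = 2 then l2 else 0)"

text \<open>Highest weight vector of a GL_d-submodule of G_d^2 isomorphic to W(l1,l2):
  nonzero element of G_d^2 of multidegree (l1,l2) killed by all D_{ij}, 1 \<le> i < j \<le> d.\<close>
definition hwv :: "nat \<Rightarrow> nat \<Rightarrow> nat \<Rightarrow> 'a::comm_ring_1 pol \<Rightarrow> bool" where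
  "hwv d l1 l2 p \<longleftrightarrow> p \<in> G2 d \<and> p \<noteq> 0 \<and> has_multideg (lam2 l1 l2) p
      \<and> (\<forall>i j. 1 \<le> i \<and> i < j \<and> j \<le> d \<longrightarrow> Dder i j p = 0)"

definition widx :: "nat \<Rightarrow> nat \<Rightarrow> nat set" where
  "widx l1 l2 = (if l2 = 0 then {1..l1 - 1} else {0..l1 - l2})"

definition wvec :: "nat \<Rightarrow> nat \<Rightarrow> nat \<Rightarrow> 'a::comm_ring_1 pol" where
  "wvec l1 l2 j = (if l2 = 0 then PVar (Yv 1) ^ j * PVar (Zv 1) ^ (l1 - j)
     else PVar (Yv 1) ^ j * (PVar (Yv 1) * PVar (Zv 2) - PVar (Yv 2) * PVar (Zv 1)) ^ l2
          * PVar (Zv 1) ^ (l1 - l2 - j))"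

end

theory Submission
  imports Defs
begin

text \<open>A highest weight vector p of weight (l1, l2) only involves y1, z1, y2, z2 and is killed by
  D12 = y1 d/dy2 + z1 d/dz2. Comparing coefficients in D12 p = 0 gives two-term recursions:
  the coefficient of y1^a z1^e y2^b z2^c vanishes when e < b, and all coefficients are determined
  by the top ones, at y1^a z1^(l1-a) y2^l2 with a \<le> l1 - l2. Since y1 z2 - y2 z1 acts as
  -y2 z1 on those monomials, w_j has exactly one nonzero top coefficient, (-1)^l2 at a = j.
  So the w_j are independent and span; for l2 = 0 the top monomials y1^l1 and z1^l1 are
  excluded by membership in G_d^2, which is why j then runs only over 1..l1-1.\<close>

abbreviation lookup :: "('a \<Rightarrow>\<^sub>0 'b::zero) \<Rightarrow> 'a \<Rightarrow> 'b" where
  "lookup \<equiv> Poly_Mapping.lookup"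

abbreviation keys :: "('a \<Rightarrow>\<^sub>0 'b::zero) \<Rightarrow> 'a set" where
  "keys \<equiv> Poly_Mapping.keys"

section \<open>Coefficients, partial derivatives and the derivations D_ij\<close>

lemma lookup_single_mult:
  fixes r :: "'a::comm_ring_1 pol"
  shows "lookup (Poly_Mapping.single k c * r) m =
    (if \<forall>v. lookup k v \<le> lookup m v then c * lookup r (m - k) else 0)"
proof -
  have split: "m = k + q \<longleftrightarrow> (\<forall>v. lookup k v \<le> lookup m v) \<and> q = m - k" for q
    by (auto simp: poly_mapping_eq_iff lookup_add lookup_minus fun_eq_iff)
  have "lookup (Poly_Mapping.single k c * r) m
      = (\<Sum>l. lookup (Poly_Mapping.single k c) l * (\<Sum>q. lookup r q when m = l + q))"
    by (rule lookup_mult)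
  also have "\<dots> = c * (\<Sum>q. lookup r q when m = k + q)"
    by (simp add: lookup_single when_mult Sum_any_when_equal' mult_when)
  also have "(\<Sum>q. lookup r q when m = k + q)
      = (\<Sum>q. (lookup r q when (\<forall>v. lookup k v \<le> lookup m v)) when q = m - k)"
    by (rule Sum_any.cong) (simp add: split when_def)
  finally show ?thesis
    by (simp add: when_def)
qed

lemma lookup_PConst_mult: "lookup (PConst c * (r :: 'a::comm_ring_1 pol)) m = c * lookup r m"
  by (simp add: PConst_def lookup_single_mult)

lemma PVar_power: "(PVar v :: 'a::comm_ring_1 pol) ^ n = Poly_Mapping.single (Poly_Mapping.single v n) 1"
  by (induct n) (simp_all add: PVar_def mult_single single_add[symmetric])

lemma lookup_PVar_power_mult:
  "lookup ((PVar v :: 'a::comm_ring_1 pol) ^ n * r) m =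
     (if n \<le> lookup m v then lookup r (m - Poly_Mapping.single v n) else 0)"
  by (auto simp: PVar_power lookup_single_mult lookup_single when_def)

lemma lookup_PVar_mult:
  "lookup ((PVar v :: 'a::comm_ring_1 pol) * r) m =
     (if 0 < lookup m v then lookup r (m - Poly_Mapping.single v 1) else 0)"
  using lookup_PVar_power_mult[of v 1 r m] by simp

lemma poly_mapping_sum_single: "p = (\<Sum>a\<in>keys p. Poly_Mapping.single a (lookup p a))"
  by (rule poly_mapping_eqI) (simp add: lookup_sum lookup_single when_def in_keys_iff)

lemma lookup_pderiv_var:
  "lookup (pderiv_var v (r :: 'a::comm_ring_1 pol)) m =
     of_nat (lookup m v + 1) * lookup r (m + Poly_Mapping.single v 1)"
proof -
  let ?e = "Poly_Mapping.single v (1::nat)"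
  have "lookup (pderiv_var v r) m = (\<Sum>k\<in>keys r. of_nat (lookup k v) * lookup r k when k - ?e = m)"
    by (simp add: pderiv_var_def lookup_sum lookup_single)
  also have "\<dots> = (\<Sum>k\<in>keys r. of_nat (lookup k v) * lookup r k when k = m + ?e)"
  proof (rule sum.cong[OF refl])
    fix k
    have "lookup k v \<noteq> 0 \<Longrightarrow> k - ?e = m \<longleftrightarrow> k = m + ?e"
      by (auto simp: poly_mapping_eq_iff fun_eq_iff lookup_add lookup_minus lookup_single when_def)
    moreover have "lookup k v = 0 \<Longrightarrow> k \<noteq> m + ?e"
      by (auto simp: lookup_add)
    ultimately show "(of_nat (lookup k v) * lookup r k when k - ?e = m)
        = (of_nat (lookup k v) * lookup r k when k = m + ?e)"
      by (cases "lookup k v = 0") (auto simp: when_def)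
  qed
  also have "\<dots> = of_nat (lookup m v + 1) * lookup r (m + ?e)"
    by (simp add: when_def lookup_add in_keys_iff)
  finally show ?thesis .
qed

lemma pderiv_var_add: "pderiv_var v (p + q :: 'a::comm_ring_1 pol) = pderiv_var v p + pderiv_var v q"
  by (rule poly_mapping_eqI) (simp add: lookup_pderiv_var lookup_add algebra_simps)

lemma pderiv_var_diff: "pderiv_var v (p - q :: 'a::comm_ring_1 pol) = pderiv_var v p - pderiv_var v q"
  by (rule poly_mapping_eqI) (simp add: lookup_pderiv_var lookup_minus algebra_simps)

lemma pderiv_var_zero [simp]: "pderiv_var v (0 :: 'a::comm_ring_1 pol) = 0"
  by (simp add: pderiv_var_def)

lemma pderiv_var_sum: "pderiv_var v (\<Sum>i\<in>I. f i :: 'a::comm_ring_1 pol) = (\<Sum>i\<in>I. pderiv_var v (f i))"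
  by (induct I rule: infinite_finite_induct) (simp_all add: pderiv_var_add)

lemma pderiv_var_single:
  "pderiv_var v (Poly_Mapping.single a c :: 'a::comm_ring_1 pol)
     = Poly_Mapping.single (a - Poly_Mapping.single v 1) (of_nat (lookup a v) * c)"
  by (cases "c = 0") (simp_all add: pderiv_var_def)

lemma pderiv_var_single_mult_single:
  "pderiv_var v (Poly_Mapping.single a c * Poly_Mapping.single b c' :: 'a::comm_ring_1 pol)
     = pderiv_var v (Poly_Mapping.single a c) * Poly_Mapping.single b c'
       + Poly_Mapping.single a c * pderiv_var v (Poly_Mapping.single b c')"
proof -
  let ?e = "Poly_Mapping.single v (1::nat)"
  have "Poly_Mapping.single (a - ?e + b) (of_nat (lookup a v) * c * c')
      = (Poly_Mapping.single (a + b - ?e) (of_nat (lookup a v) * c * c') :: 'a pol)"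
  proof (cases "lookup a v = 0")
    case False
    then have "a - ?e + b = a + b - ?e"
      by (auto simp: poly_mapping_eq_iff fun_eq_iff lookup_add lookup_minus lookup_single when_def)
    then show ?thesis by simp
  qed simp
  moreover have "a + (b - ?e) = a + b - ?e" if "lookup b v \<noteq> 0"
    using that by (auto simp: poly_mapping_eq_iff fun_eq_iff lookup_add lookup_minus lookup_single when_def)
  ultimately show ?thesis
    by (cases "lookup b v = 0")
       (simp_all add: mult_single pderiv_var_single lookup_add algebra_simps single_add[symmetric])
qed

lemma pderiv_var_mult:
  "pderiv_var v (p * q :: 'a::comm_ring_1 pol) = pderiv_var v p * q + p * pderiv_var v q"
proof -
  let ?S = "\<lambda>p a. Poly_Mapping.single a (lookup p a) :: 'a pol"
  have "pderiv_var v (p * q) = pderiv_var v ((\<Sum>a\<in>keys p. ?S p a) * (\<Sum>b\<in>keys q. ?S q b))"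
    by (simp flip: poly_mapping_sum_single)
  also have "\<dots> = pderiv_var v (\<Sum>a\<in>keys p. ?S p a) * (\<Sum>b\<in>keys q. ?S q b)
      + (\<Sum>a\<in>keys p. ?S p a) * pderiv_var v (\<Sum>b\<in>keys q. ?S q b)"
    by (simp add: sum_product pderiv_var_sum pderiv_var_single_mult_single sum.distrib)
  finally show ?thesis
    by (simp flip: poly_mapping_sum_single)
qed

lemma pderiv_var_PConst [simp]: "pderiv_var v (PConst c :: 'a::comm_ring_1 pol) = 0"
  by (simp add: PConst_def pderiv_var_single)

lemma pderiv_var_PVar: "pderiv_var v (PVar u :: 'a::comm_ring_1 pol) = (if u = v then 1 else 0)"
  by (simp add: PVar_def pderiv_var_single lookup_single when_def)

lemma Dder_diff: "Dder i j (p - q :: 'a::comm_ring_1 pol) = Dder i j p - Dder i j q"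
  by (simp add: Dder_def pderiv_var_diff algebra_simps)

lemma Dder_sum: "Dder i j (\<Sum>k\<in>I. f k :: 'a::comm_ring_1 pol) = (\<Sum>k\<in>I. Dder i j (f k))"
  by (simp add: Dder_def pderiv_var_sum sum_distrib_left sum.distrib)

lemma Dder_mult: "Dder i j (p * q :: 'a::comm_ring_1 pol) = Dder i j p * q + p * Dder i j q"
  by (simp add: Dder_def pderiv_var_mult algebra_simps)

lemma Dder_PConst_mult: "Dder i j (PConst c * p :: 'a::comm_ring_1 pol) = PConst c * Dder i j p"
  unfolding Dder_mult by (simp add: Dder_def)

lemma Dder_one: "Dder i j (1 :: 'a::comm_ring_1 pol) = 0"
  using pderiv_var_single[of _ 0 "1::'a"] by (simp add: Dder_def)

lemma Dder_power_eq_0: "Dder i j p = 0 \<Longrightarrow> Dder i j (p ^ n :: 'a::comm_ring_1 pol) = 0"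
  by (induct n) (simp_all add: Dder_mult Dder_one)

lemma Dder_PVar:
  "Dder i j (PVar v :: 'a::comm_ring_1 pol) =
     (if v = Yv j then PVar (Yv i) else if v = Zv j then PVar (Zv i) else 0)"
  by (simp add: Dder_def pderiv_var_PVar)

definition delta12 :: "'a::comm_ring_1 pol" where
  "delta12 = PVar (Yv 1) * PVar (Zv 2) - PVar (Yv 2) * PVar (Zv 1)"

lemma Dder_delta12:
  assumes "1 \<le> i" "i < j"
  shows "Dder i j (delta12 :: 'a::comm_ring_1 pol) = 0"
proof (cases "j = 2")
  case True
  with assms have "i = 1" by simp
  with True show ?thesis by (simp add: delta12_def Dder_diff Dder_mult Dder_PVar)
next
  case False
  with assms have "j \<noteq> 1" by simp
  with False show ?thesis by (simp add: delta12_def Dder_diff Dder_mult Dder_PVar)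
qed

lemma wvec_eq: "wvec l1 l2 j = PVar (Yv 1) ^ j * delta12 ^ l2 * PVar (Zv 1) ^ (l1 - l2 - j)"
  by (simp add: wvec_def delta12_def)

lemma Dder_wvec: "1 \<le> i \<Longrightarrow> i < j \<Longrightarrow> Dder i j (wvec l1 l2 k :: 'a::comm_ring_1 pol) = 0"
  by (simp add: wvec_eq Dder_mult Dder_power_eq_0 Dder_delta12 Dder_PVar)

section \<open>Multidegree and membership in G_d^2\<close>

lemma has_multideg_mult:
  assumes "has_multideg lam p" "has_multideg mu q"
  shows "has_multideg (\<lambda>i. lam i + mu i) (p * q :: 'a::comm_ring_1 pol)"
  unfolding has_multideg_def
proof
  fix m assume "m \<in> keys (p * q)"
  then obtain a b where "m = a + b" "a \<in> keys p" "b \<in> keys q"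
    using keys_mult[of p q] by blast
  show "\<forall>i. lookup m (Yv i) + lookup m (Zv i) = lam i + mu i"
  proof
    fix i
    have "lookup m (Yv i) + lookup m (Zv i)
        = (lookup a (Yv i) + lookup a (Zv i)) + (lookup b (Yv i) + lookup b (Zv i))"
      using \<open>m = a + b\<close> by (simp add: lookup_add)
    with assms \<open>a \<in> keys p\<close> \<open>b \<in> keys q\<close> show "lookup m (Yv i) + lookup m (Zv i) = lam i + mu i"
      by (simp add: has_multideg_def)
  qed
qed

lemma has_multideg_power:
  "has_multideg lam p \<Longrightarrow> has_multideg (\<lambda>i. n * lam i) (p ^ n :: 'a::comm_ring_1 pol)"
proof (induct n)
  case 0
  show ?case by (simp add: has_multideg_def)
next
  case (Suc n)
  then show ?case
    using has_multideg_mult[of lam p "\<lambda>i. n * lam i" "p ^ n"] by simp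
qed

lemma has_multideg_PVar: "has_multideg (\<lambda>i. if i = vidx v then 1 else 0) (PVar v :: 'a::comm_ring_1 pol)"
  by (cases v) (simp_all add: has_multideg_def PVar_def lookup_single when_def)

lemma has_multideg_diff:
  "has_multideg lam p \<Longrightarrow> has_multideg lam q \<Longrightarrow> has_multideg lam (p - q :: 'a::comm_ring_1 pol)"
  using keys_diff[of p q] by (auto simp: has_multideg_def)

lemma has_multideg_lincomb:
  assumes "\<And>j. j \<in> A \<Longrightarrow> has_multideg lam (f j)"
  shows "has_multideg lam (\<Sum>j\<in>A. PConst (c j) * f j :: 'a::comm_ring_1 pol)"
proof -
  have "keys (PConst (c j) * f j) \<subseteq> keys (f j)" for j
    by (auto simp: in_keys_iff lookup_PConst_mult)
  then show ?thesis
    using assms keys_sum[of "\<lambda>j. PConst (c j) * f j" A] by (fastforce simp: has_multideg_def)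
qed

lemma has_multideg_delta12: "has_multideg (lam2 1 1) (delta12 :: 'a::comm_ring_1 pol)"
proof -
  have "(\<lambda>i. (if i = vidx (Yv 1) then 1 else 0) + (if i = vidx (Zv 2) then 1 else 0)) = lam2 1 1"
       "(\<lambda>i. (if i = vidx (Yv 2) then 1 else 0) + (if i = vidx (Zv 1) then 1 else 0)) = lam2 1 1"
    by (auto simp: lam2_def)
  with has_multideg_mult[OF has_multideg_PVar has_multideg_PVar] show ?thesis
    unfolding delta12_def by (metis has_multideg_diff)
qed

lemma has_multideg_wvec:
  assumes "l2 \<le> l1" "j \<le> l1 - l2"
  shows "has_multideg (lam2 l1 l2) (wvec l1 l2 j :: 'a::comm_ring_1 pol)"
proof -
  let ?e1 = "\<lambda>i::nat. if i = 1 then 1 else 0 :: nat"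
  have "has_multideg (\<lambda>i. j * ?e1 i) (PVar (Yv 1) ^ j :: 'a pol)"
    "has_multideg (\<lambda>i. l2 * lam2 1 1 i) (delta12 ^ l2 :: 'a pol)"
    "has_multideg (\<lambda>i. (l1 - l2 - j) * ?e1 i) (PVar (Zv 1) ^ (l1 - l2 - j) :: 'a pol)"
    using has_multideg_power[OF has_multideg_PVar[of "Yv 1"]] has_multideg_power[OF has_multideg_delta12]
      has_multideg_power[OF has_multideg_PVar[of "Zv 1"]]
    by simp_all
  then have "has_multideg (\<lambda>i. j * ?e1 i + l2 * lam2 1 1 i + (l1 - l2 - j) * ?e1 i) (wvec l1 l2 j :: 'a pol)"
    unfolding wvec_eq by (intro has_multideg_mult)
  moreover have "(\<lambda>i. j * ?e1 i + l2 * lam2 1 1 i + (l1 - l2 - j) * ?e1 i) = lam2 l1 l2"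
    using assms by (auto simp: lam2_def)
  ultimately show ?thesis by simp
qed

lemma keys_single_mult_le:
  "m \<in> keys (Poly_Mapping.single a c * (r :: 'a::comm_ring_1 pol)) \<Longrightarrow> lookup a v \<le> lookup m v"
  by (auto simp: in_keys_iff lookup_single_mult split: if_splits)

lemma PVar_mult_PVar:
  "PVar u * PVar v = (Poly_Mapping.single (Poly_Mapping.single u 1 + Poly_Mapping.single v 1) 1
     :: 'a::comm_ring_1 pol)"
  by (simp add: PVar_def mult_single)

lemma widx_le: "j \<in> widx l1 l2 \<Longrightarrow> j \<le> l1 - l2"
  by (auto simp: widx_def split: if_splits)

lemma keys_wvec_mixed:
  assumes "j \<in> widx l1 l2" "m \<in> keys (wvec l1 l2 j :: 'a::comm_ring_1 pol)"
  shows "(\<exists>i. 0 < lookup m (Yv i)) \<and> (\<exists>i. 0 < lookup m (Zv i))"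
proof (cases "l2 = 0")
  case True
  with assms(1) have "0 < j" "j < l1" by (auto simp: widx_def)
  have "wvec l1 l2 j = (Poly_Mapping.single
      (Poly_Mapping.single (Yv 1) j + Poly_Mapping.single (Zv 1) (l1 - j)) 1 :: 'a pol)"
    using True by (simp add: wvec_def PVar_power mult_single)
  with assms(2) \<open>0 < j\<close> \<open>j < l1\<close> show ?thesis
    by (auto simp: lookup_add lookup_single when_def intro!: exI[of _ 1])
next
  case False
  then obtain k where "l2 = Suc k" by (cases l2) auto
  define R :: "'a pol" where "R = PVar (Yv 1) ^ j * delta12 ^ k * PVar (Zv 1) ^ (l1 - l2 - j)"
  have "wvec l1 l2 j = delta12 * R"
    by (simp add: R_def wvec_eq \<open>l2 = Suc k\<close> ac_simps)
  with assms(2) have "m \<in> keys (Poly_Mapping.single (Poly_Mapping.single (Yv 1) 1 + Poly_Mapping.single (Zv 2) 1) 1 * R)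
      \<or> m \<in> keys (Poly_Mapping.single (Poly_Mapping.single (Yv 2) 1 + Poly_Mapping.single (Zv 1) 1) 1 * R)"
    using keys_diff by (fastforce simp: delta12_def PVar_mult_PVar left_diff_distrib)
  moreover have "0 < lookup m u \<and> 0 < lookup m v"
    if "m \<in> keys (Poly_Mapping.single (Poly_Mapping.single u 1 + Poly_Mapping.single v 1) 1 * R)" for u v
    using keys_single_mult_le[OF that, of u] keys_single_mult_le[OF that, of v]
    by (auto simp: lookup_add lookup_single when_def)
  ultimately show ?thesis
    by blast
qed

lemma has_multideg_lam2_vidx:
  assumes "has_multideg (lam2 l1 l2) p" "m \<in> keys p" "0 < lookup m v"
  shows "vidx v \<in> {1, 2}"
proof -
  have "lookup m (Yv (vidx v)) + lookup m (Zv (vidx v)) = lam2 l1 l2 (vidx v)"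
    using assms(1,2) by (simp add: has_multideg_def)
  with assms(3) show ?thesis
    by (cases v) (auto simp: lam2_def split: if_splits)
qed

lemma wvec_in_G2:
  assumes "2 \<le> d" "l2 \<le> l1" "j \<in> widx l1 l2"
  shows "wvec l1 l2 j \<in> (G2 d :: 'a::comm_ring_1 pol set)"
proof -
  have "vidx v \<in> {1..d}" if "m \<in> keys (wvec l1 l2 j :: 'a pol)" "0 < lookup m v" for m v
    using has_multideg_lam2_vidx[OF has_multideg_wvec[OF assms(2) widx_le[OF assms(3)]] that] assms(1)
    by auto
  with keys_wvec_mixed[OF assms(3)] show ?thesis
    by (auto simp: G2_def)
qed

section \<open>Coefficients at monomials in y1, z1, y2, z2\<close>

definition monom12 :: "nat \<Rightarrow> nat \<Rightarrow> nat \<Rightarrow> nat \<Rightarrow> var \<Rightarrow>\<^sub>0 nat" where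
  "monom12 a e b c = Poly_Mapping.single (Yv 1) a + Poly_Mapping.single (Zv 1) e
     + Poly_Mapping.single (Yv 2) b + Poly_Mapping.single (Zv 2) c"

lemma lookup_monom12 [simp]:
  "lookup (monom12 a e b c) (Yv i) = (if i = 1 then a else if i = 2 then b else 0)"
  "lookup (monom12 a e b c) (Zv i) = (if i = 1 then e else if i = 2 then c else 0)"
  by (simp_all add: monom12_def lookup_add lookup_single when_def)

lemma var_poly_mapping_eqI:
  "(\<And>i. lookup m (Yv i) = lookup m' (Yv i) \<and> lookup m (Zv i) = lookup m' (Zv i)) \<Longrightarrow> m = m'"
  by (rule poly_mapping_eqI) (metis var.exhaust)

(* Stated with the literal 1 and then unfolded: simp rewrites the nat 1 to Suc 0 before these
   rules would get a chance to match. *)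
lemma monom12_arith [unfolded One_nat_def, simp]:
  "monom12 a e b c - Poly_Mapping.single (Yv 1) n = monom12 (a - n) e b c"
  "monom12 a e b c - Poly_Mapping.single (Zv 1) n = monom12 a (e - n) b c"
  "monom12 a e b c - Poly_Mapping.single (Yv 2) n = monom12 a e (b - n) c"
  "monom12 a e b c + Poly_Mapping.single (Yv 2) n = monom12 a e (b + n) c"
  "monom12 a e b c + Poly_Mapping.single (Zv 2) n = monom12 a e b (c + n)"
  by (rule var_poly_mapping_eqI; simp add: lookup_add lookup_minus lookup_single when_def)+

lemma monom12_eq_0_iff [simp]: "monom12 a e b c = 0 \<longleftrightarrow> a = 0 \<and> e = 0 \<and> b = 0 \<and> c = 0"
proof
  assume "monom12 a e b c = 0"
  then have "lookup (monom12 a e b c) (Yv i) = 0" "lookup (monom12 a e b c) (Zv i) = 0" for i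
    by simp_all
  from this[of 1] this[of 2] show "a = 0 \<and> e = 0 \<and> b = 0 \<and> c = 0"
    by simp
qed (simp add: monom12_def)

lemma has_multideg_lam2_eq_0:
  assumes "has_multideg (lam2 l1 l2) r"
    and "\<And>a e b c. a + e = l1 \<Longrightarrow> b + c = l2 \<Longrightarrow> lookup r (monom12 a e b c) = 0"
  shows "r = 0"
proof (rule ccontr)
  assume "r \<noteq> 0"
  then obtain m where m: "m \<in> keys r"
    by fastforce
  then have deg: "lookup m (Yv i) + lookup m (Zv i) = lam2 l1 l2 i" for i
    using assms(1) by (simp add: has_multideg_def)
  have m_eq: "m = monom12 (lookup m (Yv 1)) (lookup m (Zv 1)) (lookup m (Yv 2)) (lookup m (Zv 2))"
    (is "m = ?m0")
  proof (rule var_poly_mapping_eqI)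
    fix i
    show "lookup m (Yv i) = lookup ?m0 (Yv i) \<and> lookup m (Zv i) = lookup ?m0 (Zv i)"
      using deg[of i] by (auto simp: lam2_def)
  qed
  have "lookup m (Yv 1) + lookup m (Zv 1) = l1" "lookup m (Yv 2) + lookup m (Zv 2) = l2"
    using deg[of 1] deg[of 2] by (simp_all add: lam2_def)
  then have "lookup r m = 0"
    by (subst m_eq) (rule assms(2))
  with m show False
    by (simp add: in_keys_iff)
qed

(* On monomials free of z2 the determinant y1 z2 - y2 z1 acts as - y2 z1. *)
lemma lookup_delta12_mult_monom12:
  "lookup (delta12 * r :: 'a::comm_ring_1 pol) (monom12 a e b 0) =
     (if 0 < b \<and> 0 < e then - lookup r (monom12 a (e - 1) (b - 1) 0) else 0)"
proof -
  have "delta12 * r = PVar (Yv 1) * (PVar (Zv 2) * r) - PVar (Yv 2) * (PVar (Zv 1) * r)"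
    by (simp add: delta12_def algebra_simps)
  then show ?thesis
    by (simp add: lookup_minus lookup_PVar_mult)
qed

lemma lookup_delta12_power_mult_monom12:
  "lookup (delta12 ^ k * r :: 'a::comm_ring_1 pol) (monom12 a e b 0) =
     (if k \<le> b \<and> k \<le> e then (-1) ^ k * lookup r (monom12 a (e - k) (b - k) 0) else 0)"
proof (induct k arbitrary: e b)
  case (Suc k)
  have "lookup (delta12 ^ Suc k * r) (monom12 a e b 0) = lookup (delta12 * (delta12 ^ k * r)) (monom12 a e b 0)"
    by (simp add: mult.assoc)
  also have "\<dots> = (if 0 < b \<and> 0 < e then - lookup (delta12 ^ k * r) (monom12 a (e - 1) (b - 1) 0) else 0)"
    by (rule lookup_delta12_mult_monom12)
  also have "\<dots> = (if Suc k \<le> b \<and> Suc k \<le> e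
      then (-1) ^ Suc k * lookup r (monom12 a (e - Suc k) (b - Suc k) 0) else 0)"
    by (cases "0 < b \<and> 0 < e") (auto simp: Suc.hyps)
  finally show ?case .
qed simp

lemma lookup_wvec_monom12:
  assumes "l2 \<le> l1" "j \<le> l1 - l2"
  shows "lookup (wvec l1 l2 j :: 'a::comm_ring_1 pol) (monom12 a e l2 0) =
    (if a = j \<and> e = l1 - j then (-1) ^ l2 else 0)"
proof -
  have w: "wvec l1 l2 j = delta12 ^ l2 * (PVar (Yv 1) ^ j * (PVar (Zv 1) ^ (l1 - l2 - j) * (1 :: 'a pol)))"
    by (simp add: wvec_eq ac_simps)
  show ?thesis
    using assms unfolding w lookup_delta12_power_mult_monom12 lookup_PVar_power_mult
    by (auto simp: lookup_one when_def)
qed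

lemma lookup_Dder12_monom12:
  "lookup (Dder 1 2 r :: 'a::comm_ring_1 pol) (monom12 a e b c) =
     (if 0 < a then of_nat (b + 1) * lookup r (monom12 (a - 1) e (b + 1) c) else 0)
   + (if 0 < e then of_nat (c + 1) * lookup r (monom12 a (e - 1) b (c + 1)) else 0)"
  by (simp add: Dder_def lookup_add lookup_PVar_mult lookup_pderiv_var)

section \<open>The kernel of D_12 and the highest weight vectors\<close>

(* Coefficient of y1^(a+1) z1^e y2^(b-1) z2^c in D12 r = 0; its second term vanishes by induction. *)
lemma Dder12_kernel_lookup_below:
  fixes r :: "'a::field_char_0 pol"
  assumes "Dder 1 2 r = 0" "e < b"
  shows "lookup r (monom12 a e b c) = 0"
  using assms(2)
proof (induct e arbitrary: a b c)
  case 0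
  then obtain b' where "b = Suc b'"
    by (cases b) auto
  with assms(1) lookup_Dder12_monom12[of r "Suc a" 0 b' c] show ?case
    by (simp del: of_nat_Suc)
next
  case (Suc e)
  then obtain b' where "b = Suc b'" "e < b'"
    by (cases b) auto
  with Suc.hyps assms(1) lookup_Dder12_monom12[of r "Suc a" "Suc e" b' c] show ?case
    by (simp del: of_nat_Suc)
qed

(* Coefficient of y1^a z1^(e+1) y2^(l2-k-1) z2^k in D12 r = 0, which passes from z2^k to z2^(k+1). *)
lemma Dder12_kernel_lookup_from_top:
  fixes r :: "'a::field_char_0 pol"
  assumes "Dder 1 2 r = 0" "\<And>a e. lookup r (monom12 a e l2 0) = 0" "k \<le> l2"
  shows "lookup r (monom12 a e (l2 - k) k) = 0"
  using assms(3)
proof (induct k arbitrary: a e)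
  case 0
  with assms(2) show ?case
    by simp
next
  case (Suc k)
  then have b: "l2 - Suc k + 1 = l2 - k"
    by simp
  have "lookup r (monom12 (a - 1) (Suc e) (l2 - k) k) = 0"
    using Suc by simp
  then show ?case
    using assms(1) lookup_Dder12_monom12[of r a "Suc e" "l2 - Suc k" k, unfolded b]
    by (cases a) (simp_all del: of_nat_Suc)
qed

lemma Dder12_kernel_eq_0:
  fixes r :: "'a::field_char_0 pol"
  assumes "has_multideg (lam2 l1 l2) r" "Dder 1 2 r = 0"
    and "\<And>a e. l2 \<le> e \<Longrightarrow> lookup r (monom12 a e l2 0) = 0"
  shows "r = 0"
proof (rule has_multideg_lam2_eq_0[OF assms(1)])
  have top: "lookup r (monom12 a e l2 0) = 0" for a e
    using assms(3) Dder12_kernel_lookup_below[OF assms(2)] by (cases "l2 \<le> e") auto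
  fix a e b c
  assume "b + c = l2"
  then have "b = l2 - c" "c \<le> l2"
    by auto
  then show "lookup r (monom12 a e b c) = 0"
    using Dder12_kernel_lookup_from_top[OF assms(2) top, of c a e] by simp
qed

lemma lookup_lincomb:
  "lookup (\<Sum>j\<in>A. PConst (c j) * f j :: 'a::comm_ring_1 pol) m = (\<Sum>j\<in>A. c j * lookup (f j) m)"
  by (simp add: lookup_sum lookup_PConst_mult)

lemma lookup_wvec_lincomb_monom12:
  assumes "l2 \<le> l1"
  shows "lookup (\<Sum>j\<in>widx l1 l2. PConst (c j) * wvec l1 l2 j :: 'a::comm_ring_1 pol) (monom12 a e l2 0)
    = (if a \<in> widx l1 l2 \<and> e = l1 - a then (-1) ^ l2 * c a else 0)"
proof -
  have "(\<Sum>j\<in>widx l1 l2. c j * lookup (wvec l1 l2 j :: 'a pol) (monom12 a e l2 0))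
      = (\<Sum>j\<in>widx l1 l2. if j = a then (if e = l1 - a then (-1) ^ l2 * c a else 0) else 0)"
    by (rule sum.cong) (auto simp: lookup_wvec_monom12[OF assms widx_le])
  then show ?thesis
    by (simp add: lookup_lincomb widx_def)
qed

lemma hwv_wvec:
  assumes "2 \<le> d" "l2 \<le> l1" "j \<in> widx l1 l2"
  shows "hwv d l1 l2 (wvec l1 l2 j :: 'a::comm_ring_1 pol)"
proof -
  have "lookup (wvec l1 l2 j :: 'a pol) (monom12 j (l1 - j) l2 0) = (-1) ^ l2"
    by (simp add: lookup_wvec_monom12[OF assms(2) widx_le[OF assms(3)]])
  then have "wvec l1 l2 j \<noteq> (0 :: 'a pol)"
    by (auto simp: minus_one_power_iff split: if_splits)
  with assms show ?thesis
    by (simp add: hwv_def wvec_in_G2 has_multideg_wvec widx_le Dder_wvec)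
qed

lemma wvec_linear_independent:
  assumes "l2 \<le> l1" "(\<Sum>j\<in>widx l1 l2. PConst (c j) * wvec l1 l2 j) = (0 :: 'a::comm_ring_1 pol)"
    and "k \<in> widx l1 l2"
  shows "c k = 0"
  using lookup_wvec_lincomb_monom12[OF assms(1), of c k "l1 - k"] assms(2,3)
  by (simp, metis left_minus_one_mult_self mult_zero_right)

(* For l2 > 0 every top monomial is matched by some w_j; for l2 = 0 the unmatched ones are
   z1^l1 and y1^l1, which have no y resp. no z. *)
lemma hwv_lookup_top_eq_0:
  assumes "hwv d l1 l2 (p :: 'a::comm_ring_1 pol)" "l2 \<le> e" "\<not> (a \<in> widx l1 l2 \<and> e = l1 - a)"
  shows "lookup p (monom12 a e l2 0) = 0"
proof (rule ccontr)
  assume "lookup p (monom12 a e l2 0) \<noteq> 0"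
  then have key: "monom12 a e l2 0 \<in> keys p"
    by (simp add: in_keys_iff)
  with assms(1) have "lookup (monom12 a e l2 0) (Yv 1) + lookup (monom12 a e l2 0) (Zv 1) = lam2 l1 l2 1"
    unfolding hwv_def has_multideg_def by blast
  then have "a + e = l1"
    by (simp add: lam2_def)
  with assms(2,3) have "l2 = 0" "a = 0 \<and> e = l1 \<or> a = l1 \<and> e = 0"
    by (auto simp: widx_def split: if_splits)
  with key assms(1) show False
    by (auto simp: hwv_def G2_def split: if_splits dest!: bspec[where x = "monom12 a e l2 0"])
qed

(* Subtract the combination of the w_j with the same top coefficients as p; the difference is in
   the kernel of D12 and has vanishing top coefficients. *)
lemma hwv_in_span_wvec:
  fixes p :: "'a::field_char_0 pol"
  assumes "2 \<le> d" "l2 \<le> l1" "hwv d l1 l2 p"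
  shows "\<exists>c. p = (\<Sum>j\<in>widx l1 l2. PConst (c j) * wvec l1 l2 j)"
proof -
  define c where "c j = (-1) ^ l2 * lookup p (monom12 j (l1 - j) l2 0)" for j
  define q where "q = p - (\<Sum>j\<in>widx l1 l2. PConst (c j) * wvec l1 l2 j)"
  have p: "has_multideg (lam2 l1 l2) p" "Dder 1 2 p = 0"
    using assms(1,3) by (simp_all add: hwv_def)
  have "has_multideg (lam2 l1 l2) q"
    unfolding q_def using p(1) assms(2)
    by (intro has_multideg_diff has_multideg_lincomb has_multideg_wvec widx_le)
  moreover have "Dder 1 2 q = 0"
    using p(2) by (simp add: q_def Dder_diff Dder_sum Dder_PConst_mult Dder_wvec)
  moreover have "lookup q (monom12 a e l2 0) = 0" if "l2 \<le> e" for a e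
    using hwv_lookup_top_eq_0[OF assms(3) that, of a]
    by (cases "a \<in> widx l1 l2 \<and> e = l1 - a")
       (auto simp: q_def lookup_minus lookup_wvec_lincomb_monom12[OF assms(2)] c_def)
  ultimately have "q = 0"
    by (rule Dder12_kernel_eq_0)
  then show ?thesis
    unfolding q_def by auto
qed

theorem lemma3p3:
  fixes d n l1 l2 :: nat
  assumes "d \<ge> 2" and "n \<ge> 2" and "l1 \<ge> l2" and "l1 + l2 = n"
  shows "(\<forall>j\<in>widx l1 l2. hwv d l1 l2 (wvec l1 l2 j :: 'a::field_char_0 pol))
    \<and> (\<forall>c :: nat \<Rightarrow> 'a. (\<Sum>j\<in>widx l1 l2. PConst (c j) * wvec l1 l2 j) = 0
          \<longrightarrow> (\<forall>j\<in>widx l1 l2. c j = 0))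
    \<and> (\<forall>p :: 'a pol. hwv d l1 l2 p
          \<longrightarrow> (\<exists>c. p = (\<Sum>j\<in>widx l1 l2. PConst (c j) * wvec l1 l2 j)))"
  using hwv_wvec[OF assms(1,3)] wvec_linear_independent[OF assms(3)] hwv_in_span_wvec[OF assms(1,3)]
  by blast

end
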